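(* Let $k\ge 0$ be an integer and let $G$ be a graph with $m$ edges, where $m\ge\max\{\tfrac{1}{2}k^2+6k+3,\,7k+25\}$. If $q(G)\ge m-k+1$, then $G$ contains $K_{1,m-k}$ as a subgraph.
   Context: All graphs are finite, simple and undirected. $q(G)$ denotes the signless Laplacian spectral radius of $G$, i.e. the largest eigenvalue of $Q(G)=D(G)+A(G)$, where $A(G)$ is the adjacency matrix and $D(G)$ the diagonal matrix of vertex degrees. $K_{1,t}$ denotes the star with $t$ edges (on $t+1$ vertices). *)

theory Defs
  imports "HOL-Analysis.Analysis"
begin

definition simple_graph :: "('n::finite \<Rightarrow> 'n \<Rightarrow> bool) \<Rightarrow> bool" where
  "simple_graph E \<longleftrightarrow> (\<forall>u v. E u v \<longrightarrow> E v u) \<and> (\<forall>u. \<not> E u u)"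

definition edges :: "('n::finite \<Rightarrow> 'n \<Rightarrow> bool) \<Rightarrow> 'n set set" where
  "edges E = {{u, v} | u v. E u v}"

definition degree :: "('n::finite \<Rightarrow> 'n \<Rightarrow> bool) \<Rightarrow> 'n \<Rightarrow> nat" where
  "degree E u = card {v. E u v}"

definition adj_matrix :: "('n::finite \<Rightarrow> 'n \<Rightarrow> bool) \<Rightarrow> real^'n^'n" where
  "adj_matrix E = (\<chi> i j. if E i j then 1 else 0)"

definition deg_matrix :: "('n::finite \<Rightarrow> 'n \<Rightarrow> bool) \<Rightarrow> real^'n^'n" where
  "deg_matrix E = (\<chi> i j. if i = j then real (degree E i) else 0)"

definition signless_laplacian :: "('n::finite \<Rightarrow> 'n \<Rightarrow> bool) \<Rightarrow> real^'n^'n" where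
  "signless_laplacian E = deg_matrix E + adj_matrix E"

text \<open>q(G): the largest eigenvalue of Q(G) (Q is real symmetric, so all eigenvalues are real).\<close>
definition signless_spectral_radius :: "('n::finite \<Rightarrow> 'n \<Rightarrow> bool) \<Rightarrow> real" where
  "signless_spectral_radius E =
     Max {l. \<exists>x. x \<noteq> 0 \<and> signless_laplacian E *v x = l *\<^sub>R x}"

definition contains_star :: "('n::finite \<Rightarrow> 'n \<Rightarrow> bool) \<Rightarrow> nat \<Rightarrow> bool" where
  "contains_star E t \<longleftrightarrow> (\<exists>u S. u \<notin> S \<and> card S = t \<and> (\<forall>v\<in>S. E u v))"

end

theory Submission
  imports Defs
begin

text \<open>Suppose \<open>G\<close> contains no \<open>K\<^sub>1\<^sub>,\<^sub>m\<^sub>-\<^sub>k\<close>, so every degree is at most \<open>m - k - 1\<close>.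
  Take an eigenvector \<open>x\<close> of \<open>Q(G)\<close> for \<open>q = q(G)\<close> and a vertex \<open>v\<close> maximising \<open>\<bar>x\<^sub>v\<bar> / d\<^sub>v\<close>.
  The eigen-equation at \<open>v\<close> gives \<open>q d\<^sub>v \<le> d\<^sub>v\<^sup>2 + S\<^sub>v\<close>, where \<open>S\<^sub>v\<close> is the sum of the degrees
  of the neighbours of \<open>v\<close>. Double counting edge incidences yields \<open>S\<^sub>v + d\<^sub>v \<le> 2m\<close>,
  \<open>S\<^sub>v \<le> d\<^sub>v (m - k - 1)\<close>, and \<open>S\<^sub>v \<le> m + 1\<close> when \<open>d\<^sub>v = 2\<close>; for every possible value of \<open>d\<^sub>v\<close>
  these bounds force \<open>q < m - k + 1\<close>.\<close>

abbreviation eigenvalues :: "real^'n^'n \<Rightarrow> real set" where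
  "eigenvalues A \<equiv> {l. \<exists>x. x \<noteq> 0 \<and> A *v x = l *\<^sub>R x}"

lemma symmetric_matrix_inner_commute:
  fixes A :: "real^'n^'n"
  assumes "transpose A = A"
  shows "(A *v x) \<bullet> y = x \<bullet> (A *v y)"
  by (metis assms dot_lmul_matrix vector_transpose_matrix)

lemma finite_eigenvalues_symmetric:
  fixes A :: "real^'n^'n"
  assumes sym: "transpose A = A"
  shows "finite (eigenvalues A)"
proof -
  obtain f where f: "\<And>l. l \<in> eigenvalues A \<Longrightarrow> f l \<noteq> 0 \<and> A *v f l = l *\<^sub>R f l"
    using bchoice[of "eigenvalues A" "\<lambda>l x. x \<noteq> 0 \<and> A *v x = l *\<^sub>R x"] by auto
  have "orthogonal (f a) (f b)"
    if a: "a \<in> eigenvalues A" and b: "b \<in> eigenvalues A" and "a \<noteq> b" for a b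
  proof -
    have "(A *v f a) \<bullet> f b = f a \<bullet> (A *v f b)" by (rule symmetric_matrix_inner_commute[OF sym])
    then have "a * (f a \<bullet> f b) = b * (f a \<bullet> f b)" using f[OF a] f[OF b] by simp
    then show ?thesis using \<open>a \<noteq> b\<close> unfolding orthogonal_def by simp
  qed
  then have "inj_on f (eigenvalues A)" and "pairwise orthogonal (f ` eigenvalues A)"
    using f unfolding inj_on_def pairwise_def orthogonal_def by fastforce+
  moreover have "0 \<notin> f ` eigenvalues A" using f by fastforce
  ultimately have "independent (f ` eigenvalues A)"
    using pairwise_orthogonal_independent by blast
  then have "finite (f ` eigenvalues A)" by (rule finiteI_independent)
  then show ?thesis using \<open>inj_on f (eigenvalues A)\<close> finite_imageD by blast
qed

lemma psd_quadratic_form_eq_0_imp_mult_eq_0: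
  fixes B :: "real^'n^'n"
  assumes sym: "transpose B = B" and psd: "\<And>y. y \<bullet> (B *v y) \<ge> 0"
    and zero: "x \<bullet> (B *v x) = 0"
  shows "B *v x = 0"
proof -
  have "y \<bullet> (B *v x) = 0" for y
  proof (rule ccontr)
    let ?c = "y \<bullet> (B *v x)" and ?d = "y \<bullet> (B *v y)"
    assume c: "?c \<noteq> 0"
    define t where "t = - ?c / (?d + 1)"
    have d0: "?d \<ge> 0" by (rule psd)
    have "0 \<le> (x + t *\<^sub>R y) \<bullet> (B *v (x + t *\<^sub>R y))" by (rule psd)
    also have "\<dots> = x \<bullet> (B *v x) + t * (x \<bullet> (B *v y)) + t * ?c + t * t * ?d"
      by (simp add: matrix_vector_right_distrib inner_add_left inner_add_right
          matrix_vector_mult_scaleR algebra_simps)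
    also have "x \<bullet> (B *v y) = ?c"
      using symmetric_matrix_inner_commute[OF sym, of x y] by (simp add: inner_commute)
    finally have "0 \<le> 2 * t * ?c + t * t * ?d" using zero by simp
    also have "\<dots> = ?c * ?c * (?d / ((?d + 1) * (?d + 1)) - 2 / (?d + 1))"
      using d0 by (simp add: t_def field_simps power2_eq_square)
    also have "\<dots> < 0"
    proof -
      have "?d / ((?d + 1) * (?d + 1)) < 2 / (?d + 1)" using d0 by (simp add: divide_simps)
      moreover have "?c * ?c > 0" using c not_real_square_gt_zero by blast
      ultimately show ?thesis by (simp add: mult_pos_neg)
    qed
    finally show False by simp
  qed
  from this[of "B *v x"] show ?thesis by simp
qed

text \<open>A maximiser \<open>x\<close> of the Rayleigh quotient on the unit sphere is an eigenvector: with
  \<open>\<mu> = x \<bullet> A x\<close>, the matrix \<open>\<mu> I - A\<close> is positive semidefinite and its form vanishes at \<open>x\<close>.\<close>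

lemma symmetric_matrix_has_eigenvalue:
  fixes A :: "real^'n^'n"
  assumes sym: "transpose A = A"
  shows "eigenvalues A \<noteq> {}"
proof -
  let ?R = "\<lambda>x. x \<bullet> (A *v x)"
  have "continuous_on (sphere 0 1) ?R"
    by (intro continuous_intros linear_continuous_on bounded_linear_intros matrix_vector_mul_linear)
  moreover have "sphere (0::real^'n) 1 \<noteq> {}"
    using norm_axis_1[of undefined] by (metis mem_sphere_0 empty_iff)
  ultimately obtain x where x: "x \<in> sphere 0 1" and max: "\<And>y. y \<in> sphere 0 1 \<Longrightarrow> ?R y \<le> ?R x"
    using continuous_attains_sup[OF compact_sphere] by blast
  define \<mu> where "\<mu> = ?R x"
  define B where "B = \<mu> *\<^sub>R mat 1 - A"
  have B_mult: "B *v y = \<mu> *\<^sub>R y - A *v y" for y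
    by (simp add: B_def matrix_vector_mult_diff_rdistrib scaleR_matrix_vector_assoc[symmetric])
  have "transpose B = B"
  proof -
    have "A$i$j = A$j$i" for i j
      using arg_cong[OF sym, of "\<lambda>M. M$i$j"] by (simp add: transpose_def)
    then show ?thesis by (simp add: B_def transpose_def vec_eq_iff mat_def)
  qed
  moreover have "y \<bullet> (B *v y) \<ge> 0" for y
  proof (cases "y = 0")
    case False
    have "(1 / norm y) *\<^sub>R y \<in> sphere 0 1" using False by simp
    then have "?R ((1 / norm y) *\<^sub>R y) \<le> \<mu>" using max unfolding \<mu>_def by blast
    then have "(1 / norm y)\<^sup>2 * ?R y \<le> \<mu>"
      by (simp add: matrix_vector_mult_scaleR power2_eq_square)
    then have "?R y \<le> \<mu> * (norm y)\<^sup>2" using False by (simp add: field_simps)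
    then show ?thesis by (simp add: B_mult inner_diff_right power2_norm_eq_inner)
  qed simp
  moreover have "x \<bullet> (B *v x) = 0"
    using x by (simp add: B_mult inner_diff_right \<mu>_def power2_norm_eq_inner[symmetric])
  ultimately have "B *v x = 0" by (rule psd_quadratic_form_eq_0_imp_mult_eq_0)
  then have "A *v x = \<mu> *\<^sub>R x" by (simp add: B_mult)
  moreover have "x \<noteq> 0" using x by auto
  ultimately show ?thesis by blast
qed

lemma Max_eigenvalues_in:
  fixes A :: "real^'n^'n"
  assumes "transpose A = A"
  shows "Max (eigenvalues A) \<in> eigenvalues A"
  by (intro Max_in finite_eigenvalues_symmetric symmetric_matrix_has_eigenvalue assms)

abbreviation neighbours :: "('n::finite \<Rightarrow> 'n \<Rightarrow> bool) \<Rightarrow> 'n \<Rightarrow> 'n set" where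
  "neighbours E v \<equiv> {u. E v u}"

lemma finite_edges: "finite (edges E)"
  by (rule finite_subset[of _ UNIV]) auto

lemma card_edge:
  assumes "simple_graph E" "e \<in> edges E"
  shows "card e = 2"
  using assms unfolding simple_graph_def edges_def by (auto simp: card_insert_if)

lemma card_incident_edges:
  assumes sg: "simple_graph E"
  shows "card {e \<in> edges E. w \<in> e} = degree E w"
proof -
  have "bij_betw (\<lambda>u. {w, u}) (neighbours E w) {e \<in> edges E. w \<in> e}"
  proof (rule bij_betwI')
    fix x y assume "x \<in> neighbours E w" "y \<in> neighbours E w"
    then show "({w, x} = {w, y}) = (x = y)"
      using sg unfolding simple_graph_def by (metis doubleton_eq_iff mem_Collect_eq)
  next
    fix x assume "x \<in> neighbours E w"
    then show "{w, x} \<in> {e \<in> edges E. w \<in> e}" unfolding edges_def by auto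
  next
    fix e assume "e \<in> {e \<in> edges E. w \<in> e}"
    then obtain a b where "e = {a, b}" "E a b" "w \<in> e" unfolding edges_def by auto
    then show "\<exists>x\<in>neighbours E w. e = {w, x}"
      using sg unfolding simple_graph_def by auto
  qed
  then show ?thesis unfolding degree_def by (simp add: bij_betw_same_card)
qed

lemma sum_degree_eq_sum_card_inter_edges:
  assumes "simple_graph E"
  shows "(\<Sum>w\<in>T. degree E w) = (\<Sum>e\<in>edges E. card (e \<inter> T))"
proof -
  have "(\<Sum>w\<in>T. degree E w) = (\<Sum>w\<in>T. \<Sum>e\<in>edges E. if w \<in> e then 1 else 0)"
    by (simp add: card_incident_edges[OF assms, symmetric] sum.If_cases finite_edges Int_def)
  also have "\<dots> = (\<Sum>e\<in>edges E. \<Sum>w\<in>T. if w \<in> e then 1 else 0)"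
    by (rule sum.swap)
  also have "\<dots> = (\<Sum>e\<in>edges E. card (e \<inter> T))"
    by (simp add: sum.If_cases Int_commute)
  finally show ?thesis .
qed

text \<open>Each edge meets \<open>N(v)\<close> and \<open>{v}\<close> in at most two vertices altogether.\<close>

lemma sum_neighbour_degrees_plus_degree_le:
  assumes sg: "simple_graph E"
  shows "(\<Sum>w\<in>neighbours E v. degree E w) + degree E v \<le> 2 * card (edges E)"
proof -
  have per_edge: "card (e \<inter> neighbours E v) + card (e \<inter> {v}) \<le> 2" if e: "e \<in> edges E" for e
  proof (cases "v \<in> e")
    case True
    then obtain u where "e = {v, u}"
      using e unfolding edges_def by auto
    then have "e \<inter> neighbours E v \<subseteq> {u}"
      using sg unfolding simple_graph_def by auto
    then have "card (e \<inter> neighbours E v) \<le> 1"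
      using card_mono[of "{u}"] by fastforce
    then show ?thesis using True by (simp add: Int_insert_right)
  next
    case False
    have "card (e \<inter> neighbours E v) \<le> card e"
      using card_edge[OF sg e] by (intro card_mono) (auto intro: card_ge_0_finite)
    then show ?thesis using False card_edge[OF sg e] by simp
  qed
  have "(\<Sum>w\<in>neighbours E v. degree E w) + (\<Sum>w\<in>{v}. degree E w)
      = (\<Sum>e\<in>edges E. card (e \<inter> neighbours E v) + card (e \<inter> {v}))"
    by (simp only: sum_degree_eq_sum_card_inter_edges[OF sg] sum.distrib)
  also have "\<dots> \<le> (\<Sum>e\<in>edges E. 2)" by (rule sum_mono) (rule per_edge)
  finally show ?thesis by simp
qed

text \<open>Only the edge joining the two neighbours, if present, is counted twice.\<close>

lemma sum_neighbour_degrees_le_if_degree_2: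
  assumes sg: "simple_graph E" and "degree E v = 2"
  shows "(\<Sum>w\<in>neighbours E v. degree E w) \<le> card (edges E) + 1"
proof -
  let ?N = "neighbours E v"
  have N: "card ?N = 2" using assms(2) unfolding degree_def .
  have "card (e \<inter> ?N) \<le> 1 + (if e = ?N then 1 else 0)" if e: "e \<in> edges E" for e
  proof (cases "e = ?N")
    case True
    then show ?thesis using N by simp
  next
    case False
    have "card (e \<inter> ?N) < 2"
    proof (rule ccontr)
      assume "\<not> card (e \<inter> ?N) < 2"
      then have "e \<inter> ?N = e" and "e \<inter> ?N = ?N"
        using card_edge[OF sg e] N
        by (metis Int_lower1 Int_lower2 card_eq_0_iff card_mono card_subset_eq le_antisym
            not_less zero_neq_numeral)+
      then show False using False by simp
    qed
    then show ?thesis by simp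
  qed
  then have "(\<Sum>e\<in>edges E. card (e \<inter> ?N)) \<le> (\<Sum>e\<in>edges E. 1 + (if e = ?N then 1 else 0))"
    by (rule sum_mono)
  also have "\<dots> \<le> card (edges E) + 1"
    unfolding sum.distrib sum.delta[OF finite_edges] by simp
  finally show ?thesis by (simp only: sum_degree_eq_sum_card_inter_edges[OF sg])
qed

lemma degree_less_if_not_contains_star:
  assumes "simple_graph E" and "\<not> contains_star E t"
  shows "degree E u < t"
proof (rule ccontr)
  assume "\<not> degree E u < t"
  then obtain S where "S \<subseteq> neighbours E u" "card S = t"
    unfolding degree_def by (meson not_less obtain_subset_with_card_n)
  moreover have "u \<notin> neighbours E u" using assms(1) unfolding simple_graph_def by simp
  ultimately have "contains_star E t" unfolding contains_star_def by blast
  then show False using assms(2) by contradiction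
qed

lemma signless_laplacian_mult_vec_nth:
  "(signless_laplacian E *v x) $ v = real (degree E v) * x $ v + (\<Sum>w\<in>neighbours E v. x $ w)"
proof -
  have "(signless_laplacian E *v x) $ v
      = (\<Sum>j\<in>UNIV. (if v = j then real (degree E v) * x $ j else 0) + (if E v j then x $ j else 0))"
    unfolding signless_laplacian_def deg_matrix_def adj_matrix_def matrix_vector_mult_def
    by (auto intro!: sum.cong simp: distrib_right)
  then show ?thesis by (simp add: sum.distrib sum.If_cases)
qed

lemma symmetric_signless_laplacian:
  assumes "simple_graph E"
  shows "transpose (signless_laplacian E) = signless_laplacian E"
  using assms unfolding simple_graph_def
  by (auto simp: signless_laplacian_def deg_matrix_def adj_matrix_def transpose_def vec_eq_iff)

text \<open>Choose \<open>v\<close> maximising \<open>\<bar>x\<^sub>v\<bar> / d\<^sub>v\<close>, so that \<open>\<bar>x\<^sub>w\<bar> \<le> d\<^sub>w \<bar>x\<^sub>v\<bar> / d\<^sub>v\<close> for every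
  neighbour \<open>w\<close>.\<close>

lemma signless_eigenvalue_le_degree_bound:
  assumes sg: "simple_graph E" and "x \<noteq> 0" and eigen: "signless_laplacian E *v x = l *\<^sub>R x"
  shows "l = 0 \<or> (\<exists>v. degree E v > 0 \<and>
           l * real (degree E v) \<le> real (degree E v) ^ 2 + real (\<Sum>w\<in>neighbours E v. degree E w))"
proof -
  let ?d = "\<lambda>u. real (degree E u)"
  let ?V = "{u. degree E u > 0}"
  have eq: "(l - ?d u) * x $ u = (\<Sum>w\<in>neighbours E u. x $ w)" for u
    using arg_cong[OF eigen, of "\<lambda>y. y $ u"] signless_laplacian_mult_vec_nth[of E x u]
    by (simp add: algebra_simps)
  show ?thesis
  proof (cases "\<exists>u\<in>?V. x $ u \<noteq> 0")
    case True
    then obtain u0 where u0: "u0 \<in> ?V" "x $ u0 \<noteq> 0" by blast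
    let ?g = "\<lambda>u. \<bar>x $ u\<bar> / ?d u"
    obtain v where v: "v \<in> ?V" and "Max (?g ` ?V) = ?g v"
      by (rule obtains_MAX[of ?V ?g]) (use u0 in auto)
    then have v_max: "?g u \<le> ?g v" if "u \<in> ?V" for u
      using that Max_ge[of "?g ` ?V" "?g u"] by simp
    have dv: "?d v > 0" using v by simp
    have "?g u0 > 0" using u0 by simp
    then have "?g v > 0" using v_max[OF u0(1)] by linarith
    then have xv: "\<bar>x $ v\<bar> > 0" using dv by (simp add: zero_less_divide_iff)
    have "\<bar>x $ w\<bar> \<le> ?d w * ?g v" if "w \<in> neighbours E v" for w
    proof -
      have "v \<in> neighbours E w" using that sg unfolding simple_graph_def by blast
      then have "w \<in> ?V" unfolding degree_def by (auto simp: card_gt_0_iff)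
      then show ?thesis using v_max[of w] by (simp add: divide_le_eq mult.commute)
    qed
    let ?S = "real (\<Sum>w\<in>neighbours E v. degree E w)"
    have "(l - ?d v) * \<bar>x $ v\<bar> \<le> \<bar>(l - ?d v) * x $ v\<bar>"
      unfolding abs_mult by (rule mult_right_mono) auto
    also have "\<dots> \<le> (\<Sum>w\<in>neighbours E v. \<bar>x $ w\<bar>)"
      unfolding eq by (rule sum_abs)
    also have "\<dots> \<le> (\<Sum>w\<in>neighbours E v. ?d w * ?g v)"
      by (rule sum_mono) fact
    also have "\<dots> = ?S * \<bar>x $ v\<bar> / ?d v"
      by (simp add: sum_distrib_right sum_divide_distrib)
    finally have "(l - ?d v) * ?d v * \<bar>x $ v\<bar> \<le> ?S * \<bar>x $ v\<bar>"
      using dv by (simp add: field_simps)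
    then have "(l - ?d v) * ?d v \<le> ?S" using mult_le_cancel_right_pos[OF xv] by blast
    then have "l * ?d v \<le> ?d v ^ 2 + ?S" by (simp add: algebra_simps power2_eq_square)
    then show ?thesis using v by auto
  next
    case False
    obtain v where "x $ v \<noteq> 0" using \<open>x \<noteq> 0\<close> by (metis vec_eq_iff zero_index)
    moreover have "neighbours E v = {}" and "degree E v = 0"
      using False \<open>x $ v \<noteq> 0\<close> unfolding degree_def by auto
    ultimately have "l = 0" using eq[of v] by simp
    then show ?thesis ..
  qed
qed

text \<open>For \<open>d \<ge> 3\<close> the bound \<open>d\<^sup>2 + S \<le> d\<^sup>2 - d + 2m\<close> is convex in \<open>d\<close>, so it suffices to check
  the endpoints \<open>d = 3\<close> and \<open>d = m - k - 1\<close>; this is where \<open>m \<ge> 7k + 25\<close> enters.\<close>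

lemma neighbour_sum_bound_arith:
  fixes d S m k :: nat
  assumes "0 < d" and d_le: "d \<le> m - k - 1" and m_ge: "7 * k + 25 \<le> m"
    and S_plus_d: "S + d \<le> 2 * m" and S_le: "S \<le> d * (m - k - 1)"
    and S_if_2: "d = 2 \<Longrightarrow> S \<le> m + 1"
  shows "real d ^ 2 + real S < (real m - real k + 1) * real d"
proof -
  have mk: "real (m - k - 1) = real m - real k - 1" using m_ge by simp
  consider "d = 1" | "d = 2" | "d \<ge> 3" using \<open>0 < d\<close> by linarith
  then show ?thesis
  proof cases
    case 1
    then show ?thesis using S_le m_ge mk by simp
  next
    case 2
    then show ?thesis using S_if_2 m_ge by (simp add: power2_eq_square)
  next
    case 3
    have "(real d - 3) * (real d - (real m - real k - 1)) \<le> 0"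
      using 3 d_le mk by (intro mult_nonneg_nonpos) linarith+
    then show ?thesis
      using S_plus_d m_ge by (simp add: algebra_simps power2_eq_square)
  qed
qed

lemma degree_square_plus_neighbour_sum_less:
  assumes sg: "simple_graph E" and m: "card (edges E) = m" and m_ge: "7 * k + 25 \<le> m"
    and deg_le: "\<And>u. degree E u \<le> m - k - 1" and "degree E v > 0"
  shows "real (degree E v) ^ 2 + real (\<Sum>w\<in>neighbours E v. degree E w)
           < (real m - real k + 1) * real (degree E v)"
proof (rule neighbour_sum_bound_arith[OF \<open>degree E v > 0\<close> deg_le m_ge])
  show "(\<Sum>w\<in>neighbours E v. degree E w) + degree E v \<le> 2 * m"
    using sum_neighbour_degrees_plus_degree_le[OF sg] m by simp
  show "(\<Sum>w\<in>neighbours E v. degree E w) \<le> degree E v * (m - k - 1)"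
    using sum_bounded_above[of "neighbours E v" "degree E" "m - k - 1"] deg_le
    unfolding degree_def by simp
  show "(\<Sum>w\<in>neighbours E v. degree E w) \<le> m + 1" if "degree E v = 2"
    using sum_neighbour_degrees_le_if_degree_2[OF sg that] m by simp
qed

theorem theorem1p6:
  fixes E :: "'n::finite \<Rightarrow> 'n \<Rightarrow> bool" and k m :: nat
  assumes "simple_graph E"
    and "m = card (edges E)"
    and "real m \<ge> real k ^ 2 / 2 + 6 * real k + 3"
    and "m \<ge> 7 * k + 25"
    and "signless_spectral_radius E \<ge> real m - real k + 1"
  shows "contains_star E (m - k)"
proof (rule ccontr)
  assume no_star: "\<not> contains_star E (m - k)"
  have deg_le: "degree E u \<le> m - k - 1" for u
    using degree_less_if_not_contains_star[OF assms(1) no_star, of u] by linarith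
  let ?q = "signless_spectral_radius E"
  have "?q \<in> eigenvalues (signless_laplacian E)"
    unfolding signless_spectral_radius_def
    by (rule Max_eigenvalues_in[OF symmetric_signless_laplacian[OF assms(1)]])
  then obtain v where v: "degree E v > 0"
    and q_le: "?q * real (degree E v) \<le> real (degree E v) ^ 2 + real (\<Sum>w\<in>neighbours E v. degree E w)"
    using signless_eigenvalue_le_degree_bound[OF assms(1)] assms(4,5) by fastforce
  moreover have "real (degree E v) ^ 2 + real (\<Sum>w\<in>neighbours E v. degree E w)
      < (real m - real k + 1) * real (degree E v)"
    using degree_square_plus_neighbour_sum_less[OF assms(1) assms(2)[symmetric] assms(4) deg_le v] .
  moreover have "(real m - real k + 1) * real (degree E v) \<le> ?q * real (degree E v)"
    using assms(5) by (rule mult_right_mono) simp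
  ultimately show False by linarith
qed

end
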